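(* Let $n$ and $N$ be non-negative integers with $N\le 2n-3$. Suppose $f_0,f_1,\dots,f_N$ is a sequence of positive integers such that (1) $f_0=2$, (2) $f_i=f_{i-1}\pm1$ for $1\le i\le N$, and (3) $f_i\le 2n-i-2$ for $0\le i\le N$. Then there exists a fully heterochronous ranked tree shape with $n$ leaves whose $\mathbf{F}$-matrix $F$ satisfies $F_{i,i}=f_i$ for all $0\le i\le N$.
   Context: A fully heterochronous ranked tree shape with $n$ leaves is a rooted full binary tree (every node has out-degree $0$ or $2$), without leaf labels, with $n$ leaves, together with a total ordering of all $2n-1$ nodes (leaves included) such that nodes appear in increasing order along every path from the root to a leaf; the position of a node in this order, numbered $0,1,\dots,2n-2$, is its rank (the root has rank $0$). Its $\mathbf{F}$-matrix is the $(2n-2)\times(2n-2)$ lower triangular matrix $F$, with indices running from $0$ to $2n-3$, where for $0\le j\le i$ the entry $F_{i,j}$ is the number of edges from a parent node $v$ to a child node $w$ such that the rank of $v$ is at most $j$ and the rank of $w$ is larger than $i$. *)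

theory Defs
  imports Main
begin

text \<open>A fully heterochronous ranked tree shape with n leaves is represented by
  identifying each of its 2n-1 nodes with its rank in {0..2n-2} (the root has
  rank 0) and recording, for every non-root node w (rank 1..2n-2), the rank
  par w of its parent.  Since leaves are unlabelled and the children of a node
  are unordered, such a tree shape up to isomorphism corresponds exactly to
  such a parent function.  The ranks increase along root-to-leaf paths iff
  par w < w.\<close>

definition children :: "nat \<Rightarrow> (nat \<Rightarrow> nat) \<Rightarrow> nat \<Rightarrow> nat set" where
  "children n par v = {w \<in> {1..2*n-2}. par w = v}"

definition fhrts :: "nat \<Rightarrow> (nat \<Rightarrow> nat) \<Rightarrow> bool" where
  "fhrts n par \<longleftrightarrow>
     n \<ge> 1 \<and>
     (\<forall>w \<in> {1..2*n-2}. par w < w) \<and>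
     (\<forall>v \<in> {0..2*n-2}. card (children n par v) = 0 \<or> card (children n par v) = 2) \<and>
     card {v \<in> {0..2*n-2}. children n par v = {}} = n"

definition Fmat :: "nat \<Rightarrow> (nat \<Rightarrow> nat) \<Rightarrow> nat \<Rightarrow> nat \<Rightarrow> nat" where
  "Fmat n par i j = card {w \<in> {1..2*n-2}. par w \<le> j \<and> i < w}"

end

theory Submission
  imports Defs
begin

text \<open>Let \<open>c v\<close> be the number of internal nodes among the ranks \<open>0..v\<close>. If the
  children of the internal nodes are given consecutive ranks in the order of their parents,
  the children of all nodes of rank at most \<open>i\<close> are exactly the nodes of ranks
  \<open>1..2 c(i)\<close>, so \<open>F\<^sub>i\<^sub>,\<^sub>i = 2 c(i) - i\<close>. Conversely, every \<open>c\<close> with \<open>c(0) = 1\<close>, steps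
  \<open>0\<close> or \<open>1\<close>, \<open>i < 2 c(i)\<close> and \<open>c(2n-2) = n-1\<close> arises from such a tree. Given the
  walk \<open>f\<close>, take \<open>c(i) = (f\<^sub>i + i)/2\<close> for \<open>i \<le> N\<close> and let it grow by one until it
  reaches \<open>n-1\<close>.\<close>

lemma card_flat_steps_add:
  fixes c :: "nat \<Rightarrow> nat"
  assumes step: "\<And>k. c (Suc k) = c k \<or> c (Suc k) = Suc (c k)"
  shows "card {v \<in> {1..m}. c v = c (v - 1)} + c m = m + c 0"
proof (induction m)
  case 0
  then show ?case by simp
next
  case (Suc m)
  have split: "{v \<in> {1..Suc m}. c v = c (v - 1)} =
      {v \<in> {1..m}. c v = c (v - 1)} \<union> (if c (Suc m) = c m then {Suc m} else {})"
    by (auto simp: le_Suc_eq)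
  show ?case
    using Suc step[of m] unfolding split by (auto simp: card_insert_if)
qed

locale internal_count =
  fixes n :: nat and c :: "nat \<Rightarrow> nat"
  assumes c_0: "c 0 = 1"
    and c_Suc: "c (Suc k) = c k \<or> c (Suc k) = Suc (c k)"
    and less_double_c: "k < 2 * n - 2 \<Longrightarrow> k < 2 * c k"
    and c_last: "c (2 * n - 2) = n - 1"
begin

definition par :: "nat \<Rightarrow> nat" where
  "par w = (LEAST v. w \<le> 2 * c v)"

lemma two_le_n: "2 \<le> n"
  using c_0 c_last by (cases "n \<le> 1") auto

lemma mono_c: "mono c"
  unfolding mono_iff_le_Suc using c_Suc by (metis le_Suc_eq order_refl)

lemma c_le: "k \<le> 2 * n - 2 \<Longrightarrow> c k \<le> n - 1"
  using monoD[OF mono_c] c_last by metis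

lemma par_le_iff:
  assumes "w \<le> 2 * n - 2"
  shows "par w \<le> v \<longleftrightarrow> w \<le> 2 * c v"
proof
  have "w \<le> 2 * c (2 * n - 2)"
    using assms two_le_n c_last by simp
  then have "w \<le> 2 * c (par w)"
    unfolding par_def by (rule LeastI)
  then show "w \<le> 2 * c v" if "par w \<le> v"
    using monoD[OF mono_c that] by simp
next
  show "par w \<le> v" if "w \<le> 2 * c v"
    unfolding par_def using that by (rule Least_le)
qed

lemma par_less:
  assumes "w \<in> {1..2 * n - 2}"
  shows "par w < w"
proof -
  have "w - 1 < 2 * n - 2"
    using assms by auto
  then have "w \<le> 2 * c (w - 1)"
    using less_double_c by fastforce
  then show ?thesis
    using par_le_iff[of w "w - 1"] assms by auto
qed

lemma children_0: "children n par 0 = {1, 2}"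
proof -
  have "par w = 0 \<longleftrightarrow> w \<le> 2" if "w \<le> 2 * n - 2" for w
    using par_le_iff[OF that, of 0] c_0 by simp
  then show ?thesis
    unfolding children_def using two_le_n by auto
qed

lemma children_Suc:
  assumes "Suc u \<le> 2 * n - 2"
  shows "children n par (Suc u) = {Suc (2 * c u) .. 2 * c (Suc u)}"
proof -
  have "par w = Suc u \<longleftrightarrow> par w \<le> Suc u \<and> \<not> par w \<le> u" for w
    by auto
  then have "children n par (Suc u) =
      {w \<in> {1..2 * n - 2}. w \<le> 2 * c (Suc u) \<and> \<not> w \<le> 2 * c u}"
    unfolding children_def using par_le_iff by auto
  also have "\<dots> = {Suc (2 * c u) .. 2 * c (Suc u)}"
    using c_le[OF assms] by auto
  finally show ?thesis .
qed

lemma card_children: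
  assumes "v \<le> 2 * n - 2"
  shows "card (children n par v) = 0 \<or> card (children n par v) = 2"
proof (cases v)
  case 0
  then show ?thesis
    using children_0 by simp
next
  case (Suc u)
  then show ?thesis
    using children_Suc assms c_Suc[of u] by auto
qed

lemma children_empty_iff:
  assumes "v \<le> 2 * n - 2"
  shows "children n par v = {} \<longleftrightarrow> v \<noteq> 0 \<and> c v = c (v - 1)"
proof (cases v)
  case 0
  then show ?thesis
    using children_0 by simp
next
  case (Suc u)
  then show ?thesis
    using children_Suc assms c_Suc[of u] by auto
qed

lemma card_leaves: "card {v \<in> {0..2 * n - 2}. children n par v = {}} = n"
proof -
  have "{v \<in> {0..2 * n - 2}. children n par v = {}} = {v \<in> {1..2 * n - 2}. c v = c (v - 1)}"
    using children_empty_iff by (intro Collect_cong) fastforce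
  then show ?thesis
    using card_flat_steps_add[of c "2 * n - 2", OF c_Suc] c_0 c_last two_le_n by simp
qed

lemma fhrts_par: "fhrts n par"
  unfolding fhrts_def using two_le_n par_less card_children card_leaves by auto

lemma Fmat_par_diag:
  assumes "i \<le> 2 * n - 2"
  shows "Fmat n par i i = 2 * c i - i"
proof -
  have "{w \<in> {1..2 * n - 2}. par w \<le> i \<and> i < w} = {Suc i .. 2 * c i}"
    using par_le_iff c_le[OF assms] by auto
  then show ?thesis
    unfolding Fmat_def by simp
qed

end

lemma walk_add_index_halves:
  fixes f :: "nat \<Rightarrow> int"
  assumes step: "\<forall>i \<in> {1..N}. f i = f (i - 1) + 1 \<or> f i = f (i - 1) - 1"
    and start: "f 0 = 2 * int m"
  obtains d :: "nat \<Rightarrow> nat" where "\<And>i. i \<le> N \<Longrightarrow> 2 * int (d i) = f i + int i"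
proof
  fix i
  assume "i \<le> N"
  then have "0 \<le> f i + int i \<and> even (f i + int i)"
  proof (induction i)
    case 0
    then show ?case
      using start by simp
  next
    case (Suc k)
    have "f (Suc k) = f k + 1 \<or> f (Suc k) = f k - 1"
      using step[rule_format, of "Suc k"] Suc.prems by simp
    then show ?case
      using Suc by auto
  qed
  then show "2 * int (nat ((f i + int i) div 2)) = f i + int i"
    by (auto elim: evenE)
qed

lemma internal_count_from_walk:
  fixes n N :: nat and f :: "nat \<Rightarrow> int"
  assumes N_le: "int N \<le> 2 * int n - 3"
    and pos: "\<forall>i \<le> N. f i > 0"
    and start: "f 0 = 2"
    and step: "\<forall>i \<in> {1..N}. f i = f (i - 1) + 1 \<or> f i = f (i - 1) - 1"
    and bound: "\<forall>i \<le> N. f i \<le> 2 * int n - int i - 2"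
  obtains c where "internal_count n c" and "\<forall>i \<le> N. 2 * int (c i) = f i + int i"
proof -
  obtain d where d: "\<And>i. i \<le> N \<Longrightarrow> 2 * int (d i) = f i + int i"
    using walk_add_index_halves[OF step, of 1] start by auto
  have d_Suc: "d (Suc k) = d k \<or> d (Suc k) = Suc (d k)" if "Suc k \<le> N" for k
  proof -
    have "f (Suc k) = f k + 1 \<or> f (Suc k) = f k - 1"
      using step[rule_format, of "Suc k"] that by simp
    then show ?thesis
      using d[OF that] d[of k] that by auto
  qed
  have d_N: "d N \<le> n - 1"
    using d[of N] bound N_le by auto
  define c where "c k = (if k \<le> N then d k else min (d N + (k - N)) (n - 1))" for k
  have "internal_count n c"
  proof
    show "c 0 = 1"
      using d[of 0] start unfolding c_def by simp
    show "c (Suc k) = c k \<or> c (Suc k) = Suc (c k)" for k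
      using d_Suc[of k] d_N unfolding c_def by (cases "Suc k \<le> N"; cases "k = N") auto
    show "k < 2 * c k" if "k < 2 * n - 2" for k
      using d[of k] d[of N] pos that unfolding c_def by (cases "k \<le> N") auto
    show "c (2 * n - 2) = n - 1"
      using N_le d[of N] pos unfolding c_def by auto
  qed
  moreover have "\<forall>i \<le> N. 2 * int (c i) = f i + int i"
    using d unfolding c_def by simp
  ultimately show ?thesis
    using that by blast
qed

theorem corollary1:
  fixes n N :: nat and f :: "nat \<Rightarrow> int"
  assumes "int N \<le> 2 * int n - 3"
    and "\<forall>i \<le> N. f i > 0"
    and "f 0 = 2"
    and "\<forall>i \<in> {1..N}. f i = f (i - 1) + 1 \<or> f i = f (i - 1) - 1"
    and "\<forall>i \<le> N. f i \<le> 2 * int n - int i - 2"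
  shows "\<exists>par. fhrts n par \<and> (\<forall>i \<le> N. int (Fmat n par i i) = f i)"
proof -
  obtain c where "internal_count n c" and c_f: "\<forall>i \<le> N. 2 * int (c i) = f i + int i"
    using internal_count_from_walk[OF assms] by blast
  then interpret internal_count n c
    by simp
  have "int (Fmat n par i i) = f i" if "i \<le> N" for i
  proof -
    have "Fmat n par i i = 2 * c i - i"
      using Fmat_par_diag assms(1) that by simp
    moreover have "2 * int (c i) = f i + int i" and "0 < f i"
      using c_f assms(2) that by simp_all
    ultimately show ?thesis
      by (simp add: of_nat_diff)
  qed
  then show ?thesis
    using fhrts_par by blast
qed

end
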